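(* Fix a positive integer $k$ and a permutation $\rho$. Then $\lim_{n\to\infty}\left(\operatorname{op}_{n,k}(\rho)\right)^{1/n}$ exists and is a real number in $[1,\infty)$.
   Context: An ordered set partition of $[n]$ into $k$ blocks is a sequence $B_1/B_2/\cdots/B_k$ of nonempty, pairwise disjoint subsets of $[n]$ whose union is $[n]$; the order of the blocks matters, but not the order of elements within a block. For a permutation $\rho=\rho_1\cdots\rho_m\in\mathcal{S}_m$, an ordered partition $B_1/\cdots/B_k$ contains $\rho$ if there are block indices $i_1<i_2<\cdots<i_m$ and elements $b_j\in B_{i_j}$ such that $b_1\cdots b_m$ is order-isomorphic to $\rho$ (i.e. $b_a<b_c$ iff $\rho_a<\rho_c$); otherwise it avoids $\rho$. $\operatorname{op}_{n,k}(\rho)$ denotes the number of $\rho$-avoiding ordered partitions of $[n]$ into $k$ blocks. *)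

theory Defs
  imports Complex_Main
begin

definition is_perm :: "nat list \<Rightarrow> bool" where
  "is_perm rho \<longleftrightarrow> distinct rho \<and> set rho = {1..length rho}"

definition ordered_partitions :: "nat \<Rightarrow> nat \<Rightarrow> nat set list set" where
  "ordered_partitions n k =
     {Bs. length Bs = k \<and> (\<forall>B\<in>set Bs. B \<noteq> {}) \<and>
          (\<forall>i<k. \<forall>j<k. i \<noteq> j \<longrightarrow> Bs ! i \<inter> Bs ! j = {}) \<and>
          \<Union>(set Bs) = {1..n}}"

definition op_contains :: "nat set list \<Rightarrow> nat list \<Rightarrow> bool" where
  "op_contains Bs rho \<longleftrightarrow>
     (\<exists>idx bs. length idx = length rho \<and> length bs = length rho \<and>
        sorted_wrt (<) idx \<and>
        (\<forall>j<length rho. idx ! j < length Bs \<and> bs ! j \<in> Bs ! (idx ! j)) \<and>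
        (\<forall>a<length rho. \<forall>c<length rho. bs ! a < bs ! c \<longleftrightarrow> rho ! a < rho ! c))"

definition op_count :: "nat \<Rightarrow> nat \<Rightarrow> nat list \<Rightarrow> nat" where
  "op_count n k rho = card {Bs \<in> ordered_partitions n k. \<not> op_contains Bs rho}"

end

theory Submission
  imports Defs
begin

text \<open>
  Let w(n) count the rho-avoiding ordered partitions of [n] into k blocks when empty blocks are
  allowed. Cutting such a partition of [n + m] into its traces on {1..n} and on {n+1..n+m}
  (shifted down by n) is injective and preserves avoidance, so w is submultiplicative; and
  w(n) \<ge> 1, because [n] as a single block avoids every rho of length at least 2. Fekete's
  lemma gives ln w(n) / n converging to some lambda \<ge> 0.

  The ordered partitions are squeezed: op(n,k) \<le> w(n) \<le> 2^k (k + 1) op(n+k,k). Dropping the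
  empty blocks of a weak partition leaves an ordered partition into some j \<le> k blocks, and
  op(n,j) \<le> op(n+1,j+1) and op(n,j) \<le> op(n+1,j) by avoidance-preserving injections: add a
  singleton block holding a new maximum, resp. add a twin n+1 to the block of n. Hence
  ln op(n,k) / n converges to lambda as well, and op(n,k)^(1/n) to e^lambda \<ge> 1.
\<close>

definition order_isomorphic :: "nat list \<Rightarrow> nat list \<Rightarrow> bool" where
  "order_isomorphic bs rho \<longleftrightarrow> length bs = length rho \<and>
     (\<forall>a<length rho. \<forall>c<length rho. bs ! a < bs ! c \<longleftrightarrow> rho ! a < rho ! c)"

fun embeds :: "nat list \<Rightarrow> nat set list \<Rightarrow> bool" where
  "embeds [] Bs = True"
| "embeds (b # bs) [] = False"
| "embeds (b # bs) (B # Bs) = ((b \<in> B \<and> embeds bs Bs) \<or> embeds (b # bs) Bs)"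

lemma embeds_imp_indices:
  "embeds bs Bs \<Longrightarrow> \<exists>idx. length idx = length bs \<and> sorted_wrt (<) idx \<and>
     (\<forall>j<length bs. idx ! j < length Bs \<and> bs ! j \<in> Bs ! (idx ! j))"
proof (induction bs Bs rule: embeds.induct)
  case (3 b bs B Bs)
  show ?case
  proof (cases "b \<in> B \<and> embeds bs Bs")
    case True
    with "3.IH"(1) obtain idx where "length idx = length bs" "sorted_wrt (<) idx"
      "\<forall>j<length bs. idx ! j < length Bs \<and> bs ! j \<in> Bs ! (idx ! j)" by blast
    with True show ?thesis
      by (intro exI[of _ "0 # map Suc idx"]) (auto simp: sorted_wrt_map nth_Cons split: nat.splits)
  next
    case False
    with "3.prems" "3.IH"(2) obtain idx where "length idx = length (b # bs)" "sorted_wrt (<) idx"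
      "\<forall>j<length (b # bs). idx ! j < length Bs \<and> (b # bs) ! j \<in> Bs ! (idx ! j)" by auto
    then show ?thesis
      by (intro exI[of _ "map Suc idx"]) (auto simp: sorted_wrt_map)
  qed
qed auto

lemma indices_imp_embeds:
  "length idx = length bs \<Longrightarrow> sorted_wrt (<) idx \<Longrightarrow>
     \<forall>j<length bs. idx ! j < length Bs \<and> bs ! j \<in> Bs ! (idx ! j) \<Longrightarrow> embeds bs Bs"
proof (induction Bs arbitrary: bs idx)
  case Nil
  then show ?case by (cases bs) auto
next
  case (Cons B Bs)
  show ?case
  proof (cases bs)
    case (Cons b bs')
    with Cons.prems obtain i idx' where idx: "idx = i # idx'" by (cases idx) auto
    have "\<forall>x\<in>set idx'. 0 < x" using Cons.prems(2) idx by auto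
    then obtain idx0 where idx0: "idx' = map Suc idx0"
      by (metis Suc_pred ex_map_conv)
    show ?thesis
    proof (cases i)
      case 0
      have "embeds bs' Bs"
        by (rule Cons.IH[of idx0]) (use Cons.prems idx idx0 0 \<open>bs = b # bs'\<close> in \<open>auto simp: sorted_wrt_map\<close>)
      moreover have "b \<in> B" using Cons.prems idx 0 \<open>bs = b # bs'\<close> by (drule_tac x=0 in spec) auto
      ultimately show ?thesis using \<open>bs = b # bs'\<close> by simp
    next
      case (Suc i')
      have "embeds bs Bs"
        apply (rule Cons.IH[of "i' # idx0"])
        using Cons.prems idx idx0 Suc
          apply (auto simp: sorted_wrt_map)
        subgoal for j by (drule spec[of _ j]) (cases j; auto)
        subgoal for j by (drule spec[of _ j]) (cases j; auto)
        done
      then show ?thesis using \<open>bs = b # bs'\<close> by simp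
    qed
  qed simp
qed

lemma op_contains_iff_embeds: "op_contains Bs rho \<longleftrightarrow> (\<exists>bs. order_isomorphic bs rho \<and> embeds bs Bs)"
proof
  assume "op_contains Bs rho"
  then obtain idx bs where "length idx = length rho" "length bs = length rho" "sorted_wrt (<) idx"
      "\<forall>j<length rho. idx ! j < length Bs \<and> bs ! j \<in> Bs ! (idx ! j)"
      "\<forall>a<length rho. \<forall>c<length rho. bs ! a < bs ! c \<longleftrightarrow> rho ! a < rho ! c"
    unfolding op_contains_def by blast
  then show "\<exists>bs. order_isomorphic bs rho \<and> embeds bs Bs"
    unfolding order_isomorphic_def using indices_imp_embeds[of idx bs Bs] by auto
next
  assume "\<exists>bs. order_isomorphic bs rho \<and> embeds bs Bs"
  then obtain bs where "order_isomorphic bs rho" "embeds bs Bs" by blast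
  moreover obtain idx where "length idx = length bs" "sorted_wrt (<) idx"
     "\<forall>j<length bs. idx ! j < length Bs \<and> bs ! j \<in> Bs ! (idx ! j)"
    using embeds_imp_indices[OF \<open>embeds bs Bs\<close>] by blast
  ultimately show "op_contains Bs rho"
    unfolding op_contains_def order_isomorphic_def by (intro exI[of _ idx] exI[of _ bs]) auto
qed

lemma embeds_set_subset: "embeds bs Bs \<Longrightarrow> set bs \<subseteq> \<Union>(set Bs)"
  by (induction bs Bs rule: embeds.induct) auto

lemma embeds_replicate_empty: "\<not> embeds (b # bs) (replicate j {})"
  by (induction j) auto

lemma embeds_filter: "embeds bs (filter P Bs) \<Longrightarrow> embeds bs Bs"
  by (induction Bs arbitrary: bs) (auto elim: embeds.elims split: if_splits)

lemma embeds_Cons: "embeds bs Bs \<Longrightarrow> embeds bs (B # Bs)"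
  by (cases bs) auto

lemma embeds_map_blocks:
  "\<forall>B\<in>set Bs. f ` G B \<subseteq> B \<Longrightarrow> embeds bs (map G Bs) \<Longrightarrow> embeds (map f bs) Bs"
proof (induction Bs arbitrary: bs)
  case Nil
  then show ?case by (cases bs) auto
next
  case (Cons B Bs)
  have IH: "embeds cs (map G Bs) \<Longrightarrow> embeds (map f cs) Bs" for cs
    using Cons by simp
  show ?case using Cons.prems by (cases bs) (auto dest: IH)
qed

lemma embeds_map_subset: "\<forall>B\<in>set Bs. G B \<subseteq> B \<Longrightarrow> embeds bs (map G Bs) \<Longrightarrow> embeds bs Bs"
  using embeds_map_blocks[of Bs id G bs] by simp

lemma embeds_map_image: "embeds bs (map (image f) Bs) \<Longrightarrow> \<exists>bs'. bs = map f bs' \<and> embeds bs' Bs"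
proof (induction Bs arbitrary: bs)
  case Nil
  then show ?case by (cases bs) auto
next
  case (Cons B Bs)
  show ?case
  proof (cases bs)
    case (Cons b bs1)
    show ?thesis
    proof (cases "b \<in> f ` B \<and> embeds bs1 (map (image f) Bs)")
      case True
      then obtain b' bs' where "b' \<in> B" "b = f b'" "bs1 = map f bs'" "embeds bs' Bs"
        using Cons.IH by blast
      then show ?thesis using Cons by (intro exI[of _ "b' # bs'"]) auto
    next
      case False
      then have "embeds bs (map (image f) Bs)" using Cons.prems Cons by auto
      then obtain bs' where "bs = map f bs'" "embeds bs' Bs" using Cons.IH by blast
      then show ?thesis by (intro exI[of _ bs']) (cases bs'; auto)
    qed
  qed auto
qed

lemma embeds_snoc:
  "embeds bs (Bs @ [C]) \<Longrightarrow> embeds bs Bs \<or> (\<exists>bs' c. bs = bs' @ [c] \<and> c \<in> C \<and> embeds bs' Bs)"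
proof (induction Bs arbitrary: bs)
  case Nil
  then show ?case by (cases bs) (auto elim: embeds.elims)
next
  case (Cons D Ds)
  show ?case
  proof (cases bs)
    case (Cons b bs1)
    then have "b \<in> D \<and> embeds bs1 (Ds @ [C]) \<or> embeds bs (Ds @ [C])" using Cons.prems by simp
    then show ?thesis
    proof
      assume "b \<in> D \<and> embeds bs1 (Ds @ [C])"
      with Cons.IH[of bs1] show ?thesis using \<open>bs = b # bs1\<close> by (auto intro: exI[of _ "b # _"])
    next
      assume "embeds bs (Ds @ [C])"
      with Cons.IH[of bs] show ?thesis by (auto intro: embeds_Cons)
    qed
  qed simp
qed

lemma order_isomorphic_map:
  assumes "strict_mono_on A f" "set bs \<subseteq> A"
  shows "order_isomorphic (map f bs) rho \<longleftrightarrow> order_isomorphic bs rho"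
proof -
  have "f (bs ! a) < f (bs ! c) \<longleftrightarrow> bs ! a < bs ! c" if "a < length bs" "c < length bs" for a c
    using assms that by (meson nth_mem strict_mono_on_less subsetD)
  then show ?thesis unfolding order_isomorphic_def by auto
qed

lemma order_isomorphic_max_position:
  assumes "is_perm rho" "order_isomorphic bs rho" "i < length rho"
    and max: "\<forall>c<length rho. c \<noteq> i \<longrightarrow> bs ! c < bs ! i"
  shows "rho ! i = length rho"
proof (rule ccontr)
  assume ne: "rho ! i \<noteq> length rho"
  have "length rho \<in> set rho" using assms(1,3) unfolding is_perm_def by auto
  then obtain c where c: "c < length rho" "rho ! c = length rho" by (metis in_set_conv_nth)
  with ne have "bs ! c < bs ! i" using max by metis
  then have "length rho < rho ! i" using assms(2,3) c unfolding order_isomorphic_def by metis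
  moreover have "rho ! i \<in> {1..length rho}" using assms(1,3) nth_mem unfolding is_perm_def by blast
  ultimately show False by simp
qed

definition disjoint_blocks :: "'a set list \<Rightarrow> bool" where
  "disjoint_blocks Bs \<longleftrightarrow> (\<forall>i<length Bs. \<forall>j<length Bs. i \<noteq> j \<longrightarrow> Bs ! i \<inter> Bs ! j = {})"

lemma disjoint_blocks_Nil [simp]: "disjoint_blocks []"
  by (simp add: disjoint_blocks_def)

lemma disjoint_blocks_Cons:
  "disjoint_blocks (C # Cs) \<longleftrightarrow> (\<forall>B\<in>set Cs. C \<inter> B = {}) \<and> disjoint_blocks Cs"
  unfolding disjoint_blocks_def by (simp add: All_less_Suc2 all_set_conv_all_nth Int_commute) blast

lemma disjoint_blocks_snoc:
  "disjoint_blocks (Cs @ [C]) \<longleftrightarrow> (\<forall>B\<in>set Cs. C \<inter> B = {}) \<and> disjoint_blocks Cs"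
  by (induction Cs) (auto simp: disjoint_blocks_Cons)

lemma disjoint_blocks_replicate_empty: "disjoint_blocks (replicate j {})"
  by (simp add: disjoint_blocks_def)

lemma disjoint_blocks_filter: "disjoint_blocks Bs \<Longrightarrow> disjoint_blocks (filter P Bs)"
  by (induction Bs) (auto simp: disjoint_blocks_Cons)

lemma disjoint_blocks_map_subset:
  "(\<And>B. f B \<subseteq> B) \<Longrightarrow> disjoint_blocks Bs \<Longrightarrow> disjoint_blocks (map f Bs)"
  unfolding disjoint_blocks_def by (simp add: disjoint_iff) blast

lemma disjoint_blocks_map_image:
  assumes "inj_on f (\<Union>(set Bs))" "disjoint_blocks Bs"
  shows "disjoint_blocks (map (image f) Bs)"
  unfolding disjoint_blocks_def
proof (intro allI impI)
  fix i j assume ij: "i < length (map (image f) Bs)" "j < length (map (image f) Bs)" "i \<noteq> j"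
  then have "Bs ! i \<subseteq> \<Union>(set Bs)" "Bs ! j \<subseteq> \<Union>(set Bs)" by (auto intro: nth_mem)
  then have "f ` Bs ! i \<inter> f ` Bs ! j = f ` (Bs ! i \<inter> Bs ! j)"
    using inj_on_image_Int[OF assms(1)] by blast
  also have "Bs ! i \<inter> Bs ! j = {}" using assms(2) ij unfolding disjoint_blocks_def by simp
  finally show "map (image f) Bs ! i \<inter> map (image f) Bs ! j = {}" using ij by simp
qed

lemma embeds_block_unique:
  assumes "disjoint_blocks Bs" "embeds bs Bs" "B \<in> set Bs"
    and "x \<in> set bs" "y \<in> set bs" "x \<in> B" "y \<in> B"
  shows "x = y"
  using assms
proof (induction Bs arbitrary: bs)
  case (Cons D Ds)
  have disj: "\<forall>B\<in>set Ds. D \<inter> B = {}" "disjoint_blocks Ds"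
    using Cons.prems(1) by (auto simp: disjoint_blocks_Cons)
  obtain b bs1 where bs: "bs = b # bs1" using Cons.prems(4) by (cases bs) auto
  then have "b \<in> D \<and> embeds bs1 Ds \<or> embeds bs Ds" using Cons.prems(2) by simp
  then show ?case
  proof
    assume b: "b \<in> D \<and> embeds bs1 Ds"
    then have bs1: "set bs1 \<inter> D = {}" using disj(1) embeds_set_subset[of bs1 Ds] by blast
    show ?thesis
    proof (cases "B \<in> set Ds")
      case True
      then have "x \<noteq> b" "y \<noteq> b" using b disj(1) Cons.prems(6,7) by blast+
      then show ?thesis using Cons.IH[OF disj(2), of bs1] b True Cons.prems(4-7) bs by simp
    next
      case False
      then have "B = D" using Cons.prems(3) by simp
      then show ?thesis using bs1 bs Cons.prems(4-7) by (metis disjoint_iff set_ConsD)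
    qed
  next
    assume bs_Ds: "embeds bs Ds"
    then have "set bs \<inter> D = {}" using disj(1) embeds_set_subset[of bs Ds] by blast
    then have "B \<in> set Ds" using Cons.prems(3,4,6) by (metis disjoint_iff set_ConsD)
    then show ?thesis using Cons.IH[OF disj(2) bs_Ds] Cons.prems(4-7) by simp
  qed
qed simp

definition weak_ordered_partitions :: "nat \<Rightarrow> nat \<Rightarrow> nat set list set" where
  "weak_ordered_partitions n k = {Bs. length Bs = k \<and> disjoint_blocks Bs \<and> \<Union>(set Bs) = {1..n}}"

lemma ordered_partitions_eq:
  "ordered_partitions n k = {Bs \<in> weak_ordered_partitions n k. \<forall>B\<in>set Bs. B \<noteq> {}}"
  unfolding ordered_partitions_def weak_ordered_partitions_def disjoint_blocks_def by auto

lemma finite_weak_ordered_partitions: "finite (weak_ordered_partitions n k)"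
proof (rule finite_subset)
  show "weak_ordered_partitions n k \<subseteq> {Bs. set Bs \<subseteq> Pow {1..n} \<and> length Bs = k}"
    unfolding weak_ordered_partitions_def by auto
qed (rule finite_lists_length_eq, simp)

lemma finite_ordered_partitions: "finite (ordered_partitions n k)"
  using finite_weak_ordered_partitions ordered_partitions_eq by simp

lemma ordered_partitions_subset: "Bs \<in> ordered_partitions n k \<Longrightarrow> B \<in> set Bs \<Longrightarrow> B \<subseteq> {1..n}"
  unfolding ordered_partitions_def by blast

lemma embeds_ordered_partitions_le:
  "Bs \<in> ordered_partitions n k \<Longrightarrow> embeds bs Bs \<Longrightarrow> x \<in> set bs \<Longrightarrow> x \<le> n"
  using embeds_set_subset ordered_partitions_subset by fastforce

definition wop_count :: "nat \<Rightarrow> nat \<Rightarrow> nat list \<Rightarrow> nat" where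
  "wop_count n k rho = card {Bs \<in> weak_ordered_partitions n k. \<not> op_contains Bs rho}"

lemma op_count_le_wop_count: "op_count n k rho \<le> wop_count n k rho"
  unfolding op_count_def wop_count_def ordered_partitions_eq
  by (rule card_mono) (auto intro: finite_subset[OF _ finite_weak_ordered_partitions])

lemma wop_count_pos:
  assumes "k \<ge> 1" "length rho \<ge> 2"
  shows "wop_count n k rho \<ge> 1"
proof -
  let ?Bs = "{1..n} # replicate (k - 1) {}"
  have "?Bs \<in> weak_ordered_partitions n k"
    unfolding weak_ordered_partitions_def using assms(1)
    by (auto simp: disjoint_blocks_Cons disjoint_blocks_replicate_empty)
  moreover have "\<not> op_contains ?Bs rho"
  proof
    assume "op_contains ?Bs rho"
    then obtain bs where "order_isomorphic bs rho" "embeds bs ?Bs"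
      unfolding op_contains_iff_embeds by blast
    moreover from this obtain b1 b2 bs' where "bs = b1 # b2 # bs'"
      using assms(2) unfolding order_isomorphic_def
      by (metis One_nat_def Suc_1 Suc_le_length_iff)
    ultimately show False using embeds_replicate_empty by auto
  qed
  ultimately have "{Bs \<in> weak_ordered_partitions n k. \<not> op_contains Bs rho} \<noteq> {}" by blast
  then show ?thesis
    unfolding wop_count_def using finite_weak_ordered_partitions by (simp add: Suc_leI card_gt_0_iff)
qed

definition lower_part :: "nat \<Rightarrow> nat set list \<Rightarrow> nat set list" where
  "lower_part n Bs = map (\<lambda>B. B \<inter> {..n}) Bs"

definition upper_part :: "nat \<Rightarrow> nat set list \<Rightarrow> nat set list" where
  "upper_part n Bs = map (image (\<lambda>x. x - n)) (map (\<lambda>B. B \<inter> {n<..}) Bs)"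

lemma lower_part_weak_ordered_partitions:
  "Bs \<in> weak_ordered_partitions (n + m) k \<Longrightarrow> lower_part n Bs \<in> weak_ordered_partitions n k"
  unfolding weak_ordered_partitions_def lower_part_def by (auto intro: disjoint_blocks_map_subset)

lemma upper_part_weak_ordered_partitions:
  assumes "Bs \<in> weak_ordered_partitions (n + m) k"
  shows "upper_part n Bs \<in> weak_ordered_partitions m k"
proof -
  have "disjoint_blocks (map (\<lambda>B. B \<inter> {n<..}) Bs)"
    using assms unfolding weak_ordered_partitions_def by (auto intro: disjoint_blocks_map_subset)
  moreover have "inj_on (\<lambda>x. x - n) (\<Union>(set (map (\<lambda>B. B \<inter> {n<..}) Bs)))"
    by (auto simp: inj_on_def)
  ultimately have "disjoint_blocks (upper_part n Bs)"
    unfolding upper_part_def by (rule disjoint_blocks_map_image[rotated])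
  moreover have "\<Union>(set (upper_part n Bs)) = {1..m}"
  proof -
    have "\<Union>(set (upper_part n Bs)) = (\<lambda>x. x - n) ` ({1..n + m} \<inter> {n<..})"
      using assms unfolding upper_part_def weak_ordered_partitions_def by auto
    also have "\<dots> = {1..m}"
    proof
      show "{1..m} \<subseteq> (\<lambda>x. x - n) ` ({1..n + m} \<inter> {n<..})"
      proof
        fix x assume "x \<in> {1..m}"
        then have "x + n \<in> {1..n + m} \<inter> {n<..}" "x = (x + n) - n" by auto
        then show "x \<in> (\<lambda>x. x - n) ` ({1..n + m} \<inter> {n<..})" by blast
      qed
    qed auto
    finally show ?thesis .
  qed
  ultimately show ?thesis using assms unfolding weak_ordered_partitions_def upper_part_def by auto
qed

lemma op_contains_lower_part: "op_contains (lower_part n Bs) rho \<Longrightarrow> op_contains Bs rho"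
  unfolding op_contains_iff_embeds lower_part_def by (meson Int_lower1 embeds_map_subset)

lemma op_contains_upper_part: "op_contains (upper_part n Bs) rho \<Longrightarrow> op_contains Bs rho"
proof -
  assume "op_contains (upper_part n Bs) rho"
  then obtain bs where bs: "order_isomorphic bs rho" "embeds bs (upper_part n Bs)"
    unfolding op_contains_iff_embeds by blast
  then obtain bs' where bs': "bs = map (\<lambda>x. x - n) bs'" "embeds bs' (map (\<lambda>B. B \<inter> {n<..}) Bs)"
    unfolding upper_part_def using embeds_map_image by blast
  have "set bs' \<subseteq> {n<..}" using embeds_set_subset[OF bs'(2)] by auto
  moreover have "strict_mono_on {n<..} (\<lambda>x. x - n)" by (auto simp: strict_mono_on_def)
  ultimately have "order_isomorphic bs' rho" using order_isomorphic_map bs(1) bs'(1) by blast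
  moreover have "embeds bs' Bs" using embeds_map_subset[OF _ bs'(2)] by simp
  ultimately show ?thesis unfolding op_contains_iff_embeds by blast
qed

lemma inj_on_lower_upper_part: "inj_on (\<lambda>Bs. (lower_part n Bs, upper_part n Bs)) (weak_ordered_partitions N k)"
proof (rule inj_onI)
  fix Bs Cs assume "Bs \<in> weak_ordered_partitions N k" "Cs \<in> weak_ordered_partitions N k"
    and eq: "(lower_part n Bs, upper_part n Bs) = (lower_part n Cs, upper_part n Cs)"
  then have len: "length Bs = k" "length Cs = k" unfolding weak_ordered_partitions_def by auto
  show "Bs = Cs"
  proof (rule nth_equalityI)
    fix i assume i: "i < length Bs"
    have low: "Bs ! i \<inter> {..n} = Cs ! i \<inter> {..n}"
      using arg_cong[OF eq, of "\<lambda>p. fst p ! i"] i len unfolding lower_part_def by simp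
    have "(\<lambda>x. x - n) ` (Bs ! i \<inter> {n<..}) = (\<lambda>x. x - n) ` (Cs ! i \<inter> {n<..})"
      using arg_cong[OF eq, of "\<lambda>p. snd p ! i"] i len unfolding upper_part_def by simp
    moreover have "inj_on (\<lambda>x. x - n) {n<..}" by (auto simp: inj_on_def)
    ultimately have up: "Bs ! i \<inter> {n<..} = Cs ! i \<inter> {n<..}"
      by (simp add: inj_on_image_eq_iff)
    have "Bs ! i = (Bs ! i \<inter> {..n}) \<union> (Bs ! i \<inter> {n<..})" by auto
    also have "\<dots> = (Cs ! i \<inter> {..n}) \<union> (Cs ! i \<inter> {n<..})" using low up by simp
    also have "\<dots> = Cs ! i" by auto
    finally show "Bs ! i = Cs ! i" .
  qed (use len in simp)
qed

lemma wop_count_add_le: "wop_count (n + m) k rho \<le> wop_count n k rho * wop_count m k rho"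
proof -
  let ?A = "\<lambda>N. {Bs \<in> weak_ordered_partitions N k. \<not> op_contains Bs rho}"
  let ?split = "\<lambda>Bs. (lower_part n Bs, upper_part n Bs)"
  have "card (?A (n + m)) \<le> card (?A n \<times> ?A m)"
  proof (rule card_inj_on_le)
    show "inj_on ?split (?A (n + m))"
      using inj_on_lower_upper_part by (rule inj_on_subset) auto
    show "?split ` ?A (n + m) \<subseteq> ?A n \<times> ?A m"
      using lower_part_weak_ordered_partitions upper_part_weak_ordered_partitions
        op_contains_lower_part op_contains_upper_part by blast
  qed (use finite_weak_ordered_partitions in auto)
  then show ?thesis unfolding wop_count_def card_cartesian_product .
qed

text \<open>
  The new element Suc n is the maximum. Its singleton block goes first unless rho starts with
  its maximum; then it goes last, where it could only play rho's last letter, which is not the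
  maximum.
\<close>
definition add_max_block :: "nat list \<Rightarrow> nat \<Rightarrow> nat set list \<Rightarrow> nat set list" where
  "add_max_block rho n Bs = (if rho ! 0 \<noteq> length rho then {Suc n} # Bs else Bs @ [{Suc n}])"

lemma add_max_block_ordered_partitions:
  assumes "Bs \<in> ordered_partitions n j"
  shows "add_max_block rho n Bs \<in> ordered_partitions (Suc n) (Suc j)"
proof -
  have "\<forall>B\<in>set Bs. {Suc n} \<inter> B = {}" using ordered_partitions_subset[OF assms] by fastforce
  with assms show ?thesis
    unfolding ordered_partitions_eq weak_ordered_partitions_def add_max_block_def
    by (auto simp: disjoint_blocks_Cons disjoint_blocks_snoc)
qed

lemma add_max_block_avoids:
  assumes rho: "is_perm rho" "length rho \<ge> 2"
    and Bs: "Bs \<in> ordered_partitions n j" "\<not> op_contains Bs rho"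
  shows "\<not> op_contains (add_max_block rho n Bs) rho"
proof
  assume "op_contains (add_max_block rho n Bs) rho"
  then obtain bs where iso: "order_isomorphic bs rho" and emb: "embeds bs (add_max_block rho n Bs)"
    unfolding op_contains_iff_embeds by blast
  have len: "length bs = length rho" using iso unfolding order_isomorphic_def by simp
  have old: "\<not> embeds bs Bs" using Bs(2) iso unfolding op_contains_iff_embeds by blast
  show False
  proof (cases "rho ! 0 = length rho")
    case False
    obtain b bs1 where bs: "bs = b # bs1" using len rho(2) by (cases bs) auto
    with emb old False have b: "b = Suc n" "embeds bs1 Bs" unfolding add_max_block_def by auto
    have "bs ! c < bs ! 0" if "c < length rho" "c \<noteq> 0" for c
      using that bs b len embeds_ordered_partitions_le[OF Bs(1) b(2), of "bs1 ! (c - 1)"]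
      by (auto simp: nth_Cons')
    then have "rho ! 0 = length rho"
      using rho(2) by (intro order_isomorphic_max_position[OF rho(1) iso]) auto
    with False show False by simp
  next
    case True
    with emb old obtain bs' where bs: "bs = bs' @ [Suc n]" "embeds bs' Bs"
      unfolding add_max_block_def using embeds_snoc by fastforce
    have "bs ! c < bs ! (length rho - 1)" if "c < length rho" "c \<noteq> length rho - 1" for c
      using that bs len embeds_ordered_partitions_le[OF Bs(1) bs(2), of "bs' ! c"]
      by (auto simp: nth_append)
    then have "rho ! (length rho - 1) = length rho"
      using rho(2) by (intro order_isomorphic_max_position[OF rho(1) iso]) auto
    then have "rho ! (length rho - 1) = rho ! 0" using True by simp
    moreover have "distinct rho" using rho(1) unfolding is_perm_def by simp
    moreover have "length rho - 1 < length rho" "0 < length rho" using rho(2) by auto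
    ultimately have "length rho - 1 = 0" using nth_eq_iff_index_eq by blast
    with rho(2) show False by simp
  qed
qed

lemma op_count_le_Suc_Suc:
  assumes "is_perm rho" "length rho \<ge> 2"
  shows "op_count n j rho \<le> op_count (Suc n) (Suc j) rho"
  unfolding op_count_def
proof (rule card_inj_on_le[of "add_max_block rho n"])
  show "inj_on (add_max_block rho n) {Bs \<in> ordered_partitions n j. \<not> op_contains Bs rho}"
    by (rule inj_onI) (auto simp: add_max_block_def split: if_splits)
  show "add_max_block rho n ` {Bs \<in> ordered_partitions n j. \<not> op_contains Bs rho}
        \<subseteq> {Bs \<in> ordered_partitions (Suc n) (Suc j). \<not> op_contains Bs rho}"
    using add_max_block_ordered_partitions add_max_block_avoids[OF assms] by blast
qed (simp add: finite_ordered_partitions)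

text \<open>
  Suc n joins the block of n. A copy of rho takes at most one letter per block, so it never
  uses both twins, and identifying them yields a copy of rho in the original partition.
\<close>
definition add_twin :: "nat \<Rightarrow> nat set \<Rightarrow> nat set" where
  "add_twin n B = (if n \<in> B then insert (Suc n) B else B)"

definition merge_twin :: "nat \<Rightarrow> nat \<Rightarrow> nat" where
  "merge_twin n x = (if x = Suc n then n else x)"

lemma strict_mono_on_merge_twin: "\<not> (n \<in> A \<and> Suc n \<in> A) \<Longrightarrow> strict_mono_on A (merge_twin n)"
  unfolding strict_mono_on_def merge_twin_def by (auto simp: less_Suc_eq)

lemma inj_on_add_twin: "inj_on (add_twin n) {B. Suc n \<notin> B}"
  by (rule inj_on_inverseI[of _ "\<lambda>B. B - {Suc n}"]) (auto simp: add_twin_def)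

lemma add_twin_ordered_partitions:
  assumes Bs: "Bs \<in> ordered_partitions n k" and "n \<ge> 1"
  shows "map (add_twin n) Bs \<in> ordered_partitions (Suc n) k"
proof -
  have sub: "B \<subseteq> {1..n}" if "B \<in> set Bs" for B using ordered_partitions_subset[OF Bs that] .
  have "n \<in> \<Union>(set Bs)" using Bs \<open>n \<ge> 1\<close> unfolding ordered_partitions_def by auto
  then obtain B where "B \<in> set Bs" "n \<in> B" by blast
  then have "\<Union>(set (map (add_twin n) Bs)) = insert (Suc n) (\<Union>(set Bs))"
    unfolding add_twin_def by auto
  moreover have "add_twin n (Bs ! i) \<inter> add_twin n (Bs ! j) = {}"
    if "i < k" "j < k" "i \<noteq> j" for i j
    using Bs that sub[OF nth_mem, of i] sub[OF nth_mem, of j]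
    unfolding ordered_partitions_def add_twin_def by (auto 0 3)
  ultimately show ?thesis using Bs unfolding ordered_partitions_def add_twin_def by auto
qed

lemma add_twin_avoids:
  assumes Bs: "Bs \<in> ordered_partitions n k" "\<not> op_contains Bs rho" and "n \<ge> 1"
  shows "\<not> op_contains (map (add_twin n) Bs) rho"
proof
  assume "op_contains (map (add_twin n) Bs) rho"
  then obtain bs where iso: "order_isomorphic bs rho" and emb: "embeds bs (map (add_twin n) Bs)"
    unfolding op_contains_iff_embeds by blast
  have fresh: "Suc n \<notin> B" if "B \<in> set Bs" for B using ordered_partitions_subset[OF Bs(1) that] by auto
  have "\<not> (n \<in> set bs \<and> Suc n \<in> set bs)"
  proof
    assume both: "n \<in> set bs \<and> Suc n \<in> set bs"
    then obtain B where "B \<in> set Bs" "n \<in> add_twin n B"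
      using embeds_set_subset[OF emb] by auto
    then have "add_twin n B \<in> set (map (add_twin n) Bs)" "{n, Suc n} \<subseteq> add_twin n B"
      unfolding add_twin_def by (auto split: if_splits)
    moreover have "disjoint_blocks (map (add_twin n) Bs)"
      using add_twin_ordered_partitions[OF Bs(1) \<open>n \<ge> 1\<close>]
      unfolding ordered_partitions_eq weak_ordered_partitions_def by blast
    ultimately show False using embeds_block_unique[OF _ emb, of _ n "Suc n"] both by auto
  qed
  then have "order_isomorphic (map (merge_twin n) bs) rho"
    using iso order_isomorphic_map[OF strict_mono_on_merge_twin] by blast
  moreover have "embeds (map (merge_twin n) bs) Bs"
    using fresh by (intro embeds_map_blocks[OF _ emb]) (auto simp: add_twin_def merge_twin_def)
  ultimately show False using Bs(2) unfolding op_contains_iff_embeds by blast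
qed

lemma op_count_le_Suc:
  assumes "n \<ge> 1"
  shows "op_count n k rho \<le> op_count (Suc n) k rho"
  unfolding op_count_def
proof (rule card_inj_on_le[of "map (add_twin n)"])
  have inj: "inj_on (add_twin n) (\<Union>Bs\<in>ordered_partitions n k. set Bs)"
    by (rule inj_on_subset[OF inj_on_add_twin]) (fastforce dest: ordered_partitions_subset)
  show "inj_on (map (add_twin n)) {Bs \<in> ordered_partitions n k. \<not> op_contains Bs rho}"
  proof (rule inj_onI)
    fix Bs Cs assume "Bs \<in> {Bs \<in> ordered_partitions n k. \<not> op_contains Bs rho}"
      "Cs \<in> {Bs \<in> ordered_partitions n k. \<not> op_contains Bs rho}"
    then have "inj_on (add_twin n) (set Bs \<union> set Cs)"
      by (intro inj_on_subset[OF inj]) auto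
    then show "map (add_twin n) Bs = map (add_twin n) Cs \<Longrightarrow> Bs = Cs"
      by (simp add: inj_on_map_eq_map)
  qed
  show "map (add_twin n) ` {Bs \<in> ordered_partitions n k. \<not> op_contains Bs rho}
        \<subseteq> {Bs \<in> ordered_partitions (Suc n) k. \<not> op_contains Bs rho}"
    using add_twin_ordered_partitions add_twin_avoids assms by blast
qed (simp add: finite_ordered_partitions)

lemma nonempty_filter_eq_imp_eq:
  "map (\<lambda>B. B = {}) Bs = map (\<lambda>B. B = {}) Cs \<Longrightarrow>
     filter (\<lambda>B. B \<noteq> {}) Bs = filter (\<lambda>B. B \<noteq> {}) Cs \<Longrightarrow> Bs = Cs"
  by (induction Bs arbitrary: Cs) (auto simp: Cons_eq_map_conv split: if_splits)

lemma wop_count_le_sum_op_count: "wop_count n k rho \<le> 2 ^ k * (\<Sum>j\<le>k. op_count n j rho)"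
proof -
  let ?A = "{Bs \<in> weak_ordered_partitions n k. \<not> op_contains Bs rho}"
  let ?U = "\<Union>j\<le>k. {Cs \<in> ordered_partitions n j. \<not> op_contains Cs rho}"
  let ?E = "{es :: bool list. length es = k}"
  let ?f = "\<lambda>Bs. (filter (\<lambda>B. B \<noteq> {}) Bs, map (\<lambda>B. B = {}) Bs)"
  have "card ?A \<le> card (?U \<times> ?E)"
  proof (rule card_inj_on_le)
    show "inj_on ?f ?A" by (auto intro!: inj_onI nonempty_filter_eq_imp_eq)
    show "?f ` ?A \<subseteq> ?U \<times> ?E"
    proof (rule image_subsetI)
      fix Bs assume Bs: "Bs \<in> ?A"
      let ?F = "filter (\<lambda>B. B \<noteq> {}) Bs"
      have "?F \<in> ordered_partitions n (length ?F)"
        using Bs disjoint_blocks_filter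
        unfolding ordered_partitions_eq weak_ordered_partitions_def by auto
      moreover have "\<not> op_contains ?F rho"
        using Bs embeds_filter unfolding op_contains_iff_embeds by blast
      moreover have "length ?F \<le> k" using Bs unfolding weak_ordered_partitions_def by auto
      ultimately show "?f Bs \<in> ?U \<times> ?E" using Bs unfolding weak_ordered_partitions_def by auto
    qed
  qed (use finite_lists_length_eq[of "UNIV :: bool set" k] in \<open>simp add: finite_ordered_partitions\<close>)
  also have "\<dots> = card ?U * 2 ^ k"
    using card_lists_length_eq[of "UNIV :: bool set" k] by (simp add: card_cartesian_product)
  also have "card ?U \<le> (\<Sum>j\<le>k. op_count n j rho)"
    unfolding op_count_def by (rule card_UN_le) simp
  finally show ?thesis unfolding wop_count_def by (simp add: mult.commute)
qed

lemma op_count_le_add_add: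
  assumes "is_perm rho" "length rho \<ge> 2"
  shows "op_count n j rho \<le> op_count (n + d) (j + d) rho"
  using op_count_le_Suc_Suc[OF assms] by (induction d) (auto intro: le_trans)

lemma op_count_le_add:
  assumes "n \<ge> 1"
  shows "op_count n k rho \<le> op_count (n + d) k rho"
  using op_count_le_Suc assms by (induction d) (auto intro: le_trans)

lemma op_count_zero_blocks: "n \<ge> 1 \<Longrightarrow> op_count n 0 rho = 0"
  unfolding op_count_def ordered_partitions_def by auto

lemma wop_count_le_op_count:
  assumes "is_perm rho" "length rho \<ge> 2" "n \<ge> 1"
  shows "wop_count n k rho \<le> 2 ^ k * (k + 1) * op_count (n + k) k rho"
proof -
  have "op_count n j rho \<le> op_count (n + k) k rho" if "j \<le> k" for j
  proof (cases "j = 0")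
    case True
    then show ?thesis using op_count_zero_blocks assms(3) by simp
  next
    case False
    have "op_count n j rho \<le> op_count (n + (k - j)) (j + (k - j)) rho"
      by (rule op_count_le_add_add[OF assms(1,2)])
    also have "\<dots> \<le> op_count (n + (k - j) + j) k rho"
      using that assms(3) op_count_le_add[of "n + (k - j)" k rho j] by simp
    finally show ?thesis using that by simp
  qed
  then have sum: "(\<Sum>j\<le>k. op_count n j rho) \<le> (k + 1) * op_count (n + k) k rho"
    using sum_mono[of "{..k}" "\<lambda>j. op_count n j rho" "\<lambda>_. op_count (n + k) k rho"] by simp
  have "wop_count n k rho \<le> 2 ^ k * (\<Sum>j\<le>k. op_count n j rho)"
    by (rule wop_count_le_sum_op_count)
  also have "\<dots> \<le> 2 ^ k * ((k + 1) * op_count (n + k) k rho)"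
    using sum by (rule mult_le_mono2)
  finally show ?thesis by (simp only: mult.assoc)
qed

lemma op_count_pos:
  assumes "is_perm rho" "length rho \<ge> 2" "k \<ge> 1" "n > k"
  shows "op_count n k rho > 0"
proof -
  have "1 \<le> wop_count (n - k) k rho" using wop_count_pos assms(2,3) by blast
  also have "\<dots> \<le> 2 ^ k * (k + 1) * op_count n k rho"
    using wop_count_le_op_count[OF assms(1,2), of "n - k" k] assms(4) by simp
  finally show ?thesis by (simp add: gr0I)
qed

lemma subadditive_mult_add_le:
  fixes u :: "nat \<Rightarrow> real"
  assumes sub: "\<And>m n. u (m + n) \<le> u m + u n"
  shows "u (a * q + r) \<le> real a * u q + u r"
proof (induction a)
  case (Suc a)
  have "u (Suc a * q + r) = u (q + (a * q + r))" by (simp add: algebra_simps)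
  also have "\<dots> \<le> u q + u (a * q + r)" by (rule sub)
  also have "\<dots> \<le> u q + (real a * u q + u r)" using Suc by simp
  finally show ?case by (simp add: algebra_simps)
qed simp

lemma subadditive_quotient_le:
  fixes u :: "nat \<Rightarrow> real"
  assumes sub: "\<And>m n. u (m + n) \<le> u m + u n" and nonneg: "\<And>n. u n \<ge> 0"
    and "q \<ge> 1" "n \<ge> 1"
  shows "u n / real n \<le> u q / real q + (\<Sum>i<q. u i) / real n"
proof -
  have "u n = u ((n div q) * q + n mod q)" by simp
  also have "\<dots> \<le> real (n div q) * u q + u (n mod q)" by (rule subadditive_mult_add_le[OF sub])
  also have "u (n mod q) \<le> (\<Sum>i<q. u i)"
    using nonneg \<open>q \<ge> 1\<close> by (intro member_le_sum) auto
  also have "real (n div q) * u q \<le> real n / real q * u q"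
  proof (rule mult_right_mono[OF _ nonneg])
    have "real (n div q) * real q \<le> real n"
      by (metis div_mult_mod_eq le_add1 of_nat_le_iff of_nat_mult)
    then show "real (n div q) \<le> real n / real q" using \<open>q \<ge> 1\<close> by (simp add: field_simps)
  qed
  finally have "u n \<le> real n / real q * u q + (\<Sum>i<q. u i)" by simp
  then show ?thesis using \<open>q \<ge> 1\<close> \<open>n \<ge> 1\<close> by (simp add: field_simps)
qed

lemma Fekete_subadditive:
  fixes u :: "nat \<Rightarrow> real"
  assumes sub: "\<And>m n. u (m + n) \<le> u m + u n" and nonneg: "\<And>n. u n \<ge> 0"
  shows "(\<lambda>n. u n / real n) \<longlonglongrightarrow> (INF n\<in>{1..}. u n / real n)"
proof -
  define L where "L = (INF n\<in>{1..}. u n / real n)"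
  have bdd: "bdd_below ((\<lambda>n. u n / real n) ` {1..})"
    by (rule bdd_belowI[of _ 0]) (use nonneg in auto)
  show ?thesis unfolding L_def[symmetric]
  proof (rule LIMSEQ_I)
    fix r :: real assume r: "r > 0"
    then obtain q where q: "q \<ge> 1" "u q / real q < L + r / 2"
      using cINF_less_iff[OF _ bdd, of "L + r / 2"] unfolding L_def by auto
    define M where "M = (\<Sum>i<q. u i)"
    obtain N :: nat where N: "real N > 2 * M / r" using reals_Archimedean2 by blast
    show "\<exists>no. \<forall>n\<ge>no. norm (u n / real n - L) < r"
    proof (intro exI allI impI)
      fix n assume n: "n \<ge> max 1 (Suc N)"
      then have "2 * M / r < real n" using N by simp
      then have "M / real n < r / 2" using n r by (simp add: field_simps)
      then have "u n / real n < L + r"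
        using subadditive_quotient_le[OF sub nonneg q(1), of n, folded M_def] n q(2) by linarith
      moreover have "L \<le> u n / real n"
        unfolding L_def using bdd n by (intro cINF_lower) auto
      ultimately show "norm (u n / real n - L) < r" by simp
    qed
  qed
qed

lemma submultiplicative_ln_quotient_tendsto:
  fixes T :: "nat \<Rightarrow> real"
  assumes ge1: "\<And>n. T n \<ge> 1" and submult: "\<And>m n. T (m + n) \<le> T m * T n"
  shows "\<exists>l\<ge>0. (\<lambda>n. ln (T n) / real n) \<longlonglongrightarrow> l"
proof -
  have pos: "T n > 0" for n using ge1[of n] by linarith
  have "ln (T (m + n)) \<le> ln (T m) + ln (T n)" for m n
  proof -
    have "ln (T (m + n)) \<le> ln (T m * T n)"
      using submult[of m n] pos by (subst ln_le_cancel_iff) auto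
    also have "\<dots> = ln (T m) + ln (T n)" using pos[of m] pos[of n] by (simp add: ln_mult)
    finally show ?thesis .
  qed
  moreover have "ln (T n) \<ge> 0" for n using ge1[of n] by simp
  ultimately have lim: "(\<lambda>n. ln (T n) / real n) \<longlonglongrightarrow> (INF n\<in>{1..}. ln (T n) / real n)"
    by (rule Fekete_subadditive)
  moreover have "(INF n\<in>{1..}. ln (T n) / real n) \<ge> 0"
    by (rule LIMSEQ_le_const[OF lim]) (use ge1 in simp)
  ultimately show ?thesis by blast
qed

lemma quotient_tendsto_shift:
  fixes a :: "nat \<Rightarrow> real"
  assumes lim: "(\<lambda>n. a n / real n) \<longlonglongrightarrow> l"
  shows "(\<lambda>n. (a n - c) / real (n + d)) \<longlonglongrightarrow> l"
proof -
  have "(\<lambda>n. 1 - real d / real (n + d)) \<longlonglongrightarrow> 1"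
    using tendsto_diff[OF tendsto_const LIMSEQ_ignore_initial_segment[OF lim_const_over_n]] by simp
  moreover have "eventually (\<lambda>n. 1 - real d / real (n + d) = real n / real (n + d)) sequentially"
    using eventually_gt_at_top[of 0] by eventually_elim (simp add: field_simps)
  ultimately have "(\<lambda>n. real n / real (n + d)) \<longlonglongrightarrow> 1" by (rule Lim_transform_eventually)
  then have "(\<lambda>n. a n / real n * (real n / real (n + d)) - c / real (n + d)) \<longlonglongrightarrow> l * 1 - 0"
    by (intro tendsto_diff tendsto_mult lim LIMSEQ_ignore_initial_segment[OF lim_const_over_n])
  moreover have "eventually (\<lambda>n. a n / real n * (real n / real (n + d)) - c / real (n + d)
      = (a n - c) / real (n + d)) sequentially"
    using eventually_gt_at_top[of 0] by eventually_elim (simp add: diff_divide_distrib)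
  ultimately show ?thesis by (simp add: Lim_transform_eventually)
qed

lemma ln_quotient_sandwich:
  fixes S T :: "nat \<Rightarrow> real"
  assumes ge1: "\<And>n. T n \<ge> 1" and lim: "(\<lambda>n. ln (T n) / real n) \<longlonglongrightarrow> l"
    and upper: "\<And>n. S n \<le> T n" and lower: "\<And>n. n \<ge> 1 \<Longrightarrow> T n \<le> C * S (n + d)"
    and "C > 0"
  shows "(\<lambda>n. ln (S n) / real n) \<longlonglongrightarrow> l"
proof -
  let ?N = "\<lambda>m. m + Suc d"
  have T_le: "T (Suc m) \<le> C * S (?N m)" for m using lower[of "Suc m"] by simp
  have S_pos: "S (?N m) > 0" for m
  proof -
    have "0 < C * S (?N m)" using ge1[of "Suc m"] T_le[of m] by linarith
    with \<open>C > 0\<close> show ?thesis by (simp add: zero_less_mult_iff)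
  qed
  have lo_lim: "(\<lambda>m. (ln (T (Suc m)) - ln C) / real (?N m)) \<longlonglongrightarrow> l"
    using LIMSEQ_Suc[OF quotient_tendsto_shift[OF lim]] by simp
  have hi_lim: "(\<lambda>m. ln (T (?N m)) / real (?N m)) \<longlonglongrightarrow> l"
    using LIMSEQ_ignore_initial_segment[OF lim, of "Suc d"] by simp
  have lo_le: "(ln (T (Suc m)) - ln C) / real (?N m) \<le> ln (S (?N m)) / real (?N m)" for m
  proof -
    have "ln (T (Suc m)) \<le> ln (C * S (?N m))"
      using T_le[of m] ge1[of "Suc m"] by (subst ln_le_cancel_iff) auto
    also have "\<dots> = ln C + ln (S (?N m))" using \<open>C > 0\<close> S_pos[of m] by (simp add: ln_mult)
    finally show ?thesis by (simp add: divide_right_mono)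
  qed
  have le_hi: "ln (S (?N m)) / real (?N m) \<le> ln (T (?N m)) / real (?N m)" for m
  proof -
    have "ln (S (?N m)) \<le> ln (T (?N m))"
      using upper[of "?N m"] S_pos[of m] by (subst ln_le_cancel_iff) auto
    then show ?thesis by (simp add: divide_right_mono)
  qed
  have "(\<lambda>m. ln (S (?N m)) / real (?N m)) \<longlonglongrightarrow> l"
    using lo_le le_hi by (intro tendsto_sandwich[OF _ _ lo_lim hi_lim] always_eventually allI)
  then show ?thesis by (rule LIMSEQ_offset)
qed

lemma root_tendsto_exp_ln_quotient:
  fixes S :: "nat \<Rightarrow> real"
  assumes pos: "eventually (\<lambda>n. S n > 0) sequentially"
    and lim: "(\<lambda>n. ln (S n) / real n) \<longlonglongrightarrow> l"
  shows "(\<lambda>n. root n (S n)) \<longlonglongrightarrow> exp l"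
proof (rule Lim_transform_eventually)
  show "(\<lambda>n. exp (ln (S n) / real n)) \<longlonglongrightarrow> exp l" using lim by (rule tendsto_exp)
  have "eventually (\<lambda>n. S n > 0 \<and> n > 0) sequentially"
    using pos eventually_gt_at_top[of 0] by eventually_elim simp
  then show "eventually (\<lambda>n. exp (ln (S n) / real n) = root n (S n)) sequentially"
    by eventually_elim (simp add: root_powr_inverse powr_def)
qed

theorem theorem11:
  fixes k :: nat and rho :: "nat list"
  assumes "k \<ge> 1" and "is_perm rho" and "length rho \<ge> 2"
  shows "\<exists>L::real. L \<ge> 1 \<and> (\<lambda>n. root n (real (op_count n k rho))) \<longlonglongrightarrow> L"
proof -
  let ?T = "\<lambda>n. real (wop_count n k rho)" and ?S = "\<lambda>n. real (op_count n k rho)"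
  have T_ge1: "?T n \<ge> 1" for n using wop_count_pos[OF assms(1,3)] by simp
  have "?T (m + n) \<le> ?T m * ?T n" for m n
    using wop_count_add_le[of m n k rho] by (simp flip: of_nat_mult)
  then obtain l where "l \<ge> 0" and T_lim: "(\<lambda>n. ln (?T n) / real n) \<longlonglongrightarrow> l"
    using submultiplicative_ln_quotient_tendsto[of ?T, OF T_ge1] by blast
  have "(\<lambda>n. ln (?S n) / real n) \<longlonglongrightarrow> l"
  proof (rule ln_quotient_sandwich[OF T_ge1 T_lim])
    show "?S n \<le> ?T n" for n using op_count_le_wop_count by simp
    show "?T n \<le> (2 ^ k * (real k + 1)) * ?S (n + k)" if "n \<ge> 1" for n
      using of_nat_mono[OF wop_count_le_op_count[OF assms(2,3) that, of k], where 'a=real]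
      by (simp add: algebra_simps)
  qed simp
  moreover have "eventually (\<lambda>n. ?S n > 0) sequentially"
    using eventually_gt_at_top[of k] by eventually_elim (simp add: op_count_pos[OF assms(2,3,1)])
  ultimately have "(\<lambda>n. root n (?S n)) \<longlonglongrightarrow> exp l"
    by (intro root_tendsto_exp_ln_quotient)
  moreover have "exp l \<ge> 1" using \<open>l \<ge> 0\<close> by simp
  ultimately show ?thesis by blast
qed

end
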